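(* Let $a_1,a_2\ge0$ and $D=D_{a_1,a_2}$. (a) Let $S_1:D_1\to\mathbb{Z}_{\ge0}$. For any $h,h'\in D_1$, the local shadows $\operatorname{sh}(h;S_1)$ and $\operatorname{sh}(h';S_1)$ are either disjoint or one is contained in the other. (b) Let $S_2:D_2\to\mathbb{Z}_{\ge0}$. For any $v,v'\in D_2$, the local shadows $\operatorname{sh}(v;S_2)$ and $\operatorname{sh}(v';S_2)$ are either disjoint or one is contained in the other.
   Context: Maximal Dyck path: $D=D_{a_1,a_2}$ is the lattice path of unit East and North steps from $(0,0)$ to $(a_1,a_2)$ staying weakly below the diagonal of $[0,a_1]\times[0,a_2]$ and closest to it. $D_1$, $D_2$ are its sets of horizontal and vertical edges. Identify $(0,0)\equiv(a_1,a_2)$ so $D$ is a cyclic sequence of edges; for edges $e,e'$, $ee'$ is the subpath from $e$ to $e'$ inclusive following $D$ cyclically, $ee$ is $e$ alone, and $(ee')_1,(ee')_2$ are its horizontal and vertical edges. Local shadows: for $h\in D_1$, $\operatorname{sh}(h;S_1)=(he)_2$ where $he$ is the shortest subpath of $D$ starting at $h$ with $|(he)_2|=\sum_{h'\in(he)_1}S_1(h')$; if no such subpath exists, $\operatorname{sh}(h;S_1)=D_2$. For $v\in D_2$, $\operatorname{sh}(v;S_2)=(ev)_1$ where $ev$ is the shortest subpath of $D$ ending at $v$ with $|(ev)_1|=\sum_{v'\in(ev)_2}S_2(v')$; if no such subpath exists, $\operatorname{sh}(v;S_2)=D_1$. *)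

theory Defs
  imports Main
begin

text \<open>The maximal Dyck path D_{a1,a2} as a list of unit steps:
  True = East (horizontal edge), False = North (vertical edge).
  Edges are identified with their positions 0..n-1 in the list (n = a1 + a2).
  After the i-th East step the path rises to height floor(i*a2/a1), which is the
  highest lattice path staying weakly below the diagonal.\<close>

definition dyck_path :: "nat \<Rightarrow> nat \<Rightarrow> bool list" where
  "dyck_path a1 a2 =
     (if a1 = 0 then replicate a2 False
      else concat (map (\<lambda>i. True # replicate (i * a2 div a1 - (i - 1) * a2 div a1) False)
                       [1..<a1 + 1]))"

definition D1 :: "nat \<Rightarrow> nat \<Rightarrow> nat set" where
  "D1 a1 a2 = {i. i < length (dyck_path a1 a2) \<and> dyck_path a1 a2 ! i}"

definition D2 :: "nat \<Rightarrow> nat \<Rightarrow> nat set" where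
  "D2 a1 a2 = {i. i < length (dyck_path a1 a2) \<and> \<not> dyck_path a1 a2 ! i}"

definition cyc_from :: "nat \<Rightarrow> nat \<Rightarrow> nat \<Rightarrow> nat set" where
  "cyc_from n i k = {(i + j) mod n | j. j < k}"

definition cyc_to :: "nat \<Rightarrow> nat \<Rightarrow> nat \<Rightarrow> nat set" where
  "cyc_to n i k = {(i + n - j) mod n | j. j < k}"

definition shadow_h :: "nat \<Rightarrow> nat \<Rightarrow> (nat \<Rightarrow> nat) \<Rightarrow> nat \<Rightarrow> nat set" where
  "shadow_h a1 a2 S1 h =
    (let n = length (dyck_path a1 a2);
         P = (\<lambda>k. 1 \<le> k \<and> k \<le> n \<and>
               card (cyc_from n h k \<inter> D2 a1 a2) = (\<Sum>x \<in> cyc_from n h k \<inter> D1 a1 a2. S1 x))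
     in if \<exists>k. P k then cyc_from n h (LEAST k. P k) \<inter> D2 a1 a2 else D2 a1 a2)"

definition shadow_v :: "nat \<Rightarrow> nat \<Rightarrow> (nat \<Rightarrow> nat) \<Rightarrow> nat \<Rightarrow> nat set" where
  "shadow_v a1 a2 S2 v =
    (let n = length (dyck_path a1 a2);
         P = (\<lambda>k. 1 \<le> k \<and> k \<le> n \<and>
               card (cyc_to n v k \<inter> D1 a1 a2) = (\<Sum>x \<in> cyc_to n v k \<inter> D2 a1 a2. S2 x))
     in if \<exists>k. P k then cyc_to n v (LEAST k. P k) \<inter> D1 a1 a2 else D1 a1 a2)"

end

theory Submission
  imports Defs "HOL-Number_Theory.Cong"
begin

text \<open>Walk cyclically from an edge \<open>h\<close> and keep the running excess: the number of edges of
  the other kind met so far minus the total weight of the edges of the kind of \<open>h\<close>. The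
  excess rises by at most one per step and is \<open>\<le> 0\<close> after the first step, so before the
  shadow of \<open>h\<close> closes it is strictly negative. If \<open>h'\<close> (of the same kind) lies on the segment
  of \<open>h\<close>, the excess accumulated from \<open>h'\<close> to the end of that segment is therefore positive,
  so by a discrete intermediate value argument the shadow of \<open>h'\<close> closes inside the segment
  of \<open>h\<close>. If neither edge lies on the other's segment, the two cyclic segments are disjoint.
  Only the cyclic order of the edges matters, not the shape of the Dyck path.\<close>

lemma int_seq_unit_increments_hits_zero:
  fixes F :: "nat \<Rightarrow> int"
  assumes step: "\<And>i. F (Suc i) \<le> F i + 1" and "F a \<le> 0" and "0 < F b" and "a \<le> b"
  shows "\<exists>m. a \<le> m \<and> m \<le> b \<and> F m = 0"
  using assms(3,4)
proof (induction b)
  case 0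
  then show ?case using \<open>F a \<le> 0\<close> by auto
next
  case (Suc b)
  have "a \<le> b" using Suc.prems \<open>F a \<le> 0\<close> by (cases "a = Suc b") auto
  show ?case
  proof (cases "0 < F b")
    case True
    then show ?thesis using Suc.IH \<open>a \<le> b\<close> by auto
  next
    case False
    then have "F b = 0" using step[of b] Suc.prems by linarith
    then show ?thesis using \<open>a \<le> b\<close> by auto
  qed
qed

locale cyclic_walk =
  fixes n :: nat and walk :: "nat \<Rightarrow> nat \<Rightarrow> nat"
  assumes walk_0: "i < n \<Longrightarrow> walk i 0 = i"
    and walk_walk: "i < n \<Longrightarrow> a + b \<le> n \<Longrightarrow> walk (walk i a) b = walk i (a + b)"
    and walk_less: "i < n \<Longrightarrow> walk i a < n"
    and walk_cancel_start: "y < n \<Longrightarrow> z < n \<Longrightarrow> b \<le> n \<Longrightarrow> walk y b = walk z b \<Longrightarrow> y = z"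
    and inj_on_walk: "i < n \<Longrightarrow> inj_on (walk i) {..<n}"
begin

definition segment :: "nat \<Rightarrow> nat \<Rightarrow> nat set" where
  "segment i k = walk i ` {..<k}"

lemma segments_disjoint:
  assumes "h < n" "h' < n" "k \<le> n" "k' \<le> n"
    and "h' \<notin> segment h k" "h \<notin> segment h' k'"
  shows "segment h k \<inter> segment h' k' = {}"
proof (rule ccontr)
  assume "segment h k \<inter> segment h' k' \<noteq> {}"
  then obtain a b where ab: "walk h a = walk h' b" "a < k" "b < k'"
    by (auto simp: segment_def)
  show False
  proof (cases "b \<le> a")
    case True
    have "walk (walk h (a - b)) b = walk h' b"
      using walk_walk[OF \<open>h < n\<close>, of "a - b" b] True ab assms(3) by simp
    moreover have "b \<le> n" using ab(3) assms(4) by simp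
    ultimately have "walk h (a - b) = h'"
      using walk_cancel_start[OF walk_less[OF assms(1)] assms(2)] by blast
    then show False using assms(5) ab(2) by (auto simp: segment_def)
  next
    case False
    have "walk (walk h' (b - a)) a = walk h a"
      using walk_walk[OF \<open>h' < n\<close>, of "b - a" a] False ab assms(4) by simp
    moreover have "a \<le> n" using ab(2) assms(3) by simp
    ultimately have "walk h' (b - a) = h"
      using walk_cancel_start[OF walk_less[OF assms(2)] assms(1)] by blast
    then show False using assms(6) ab(3) by (auto simp: segment_def)
  qed
qed

end

locale walk_shadow = cyclic_walk +
  fixes A B :: "nat set" and S :: "nat \<Rightarrow> nat"
  assumes disjoint: "A \<inter> B = {}"
begin

definition weight :: "nat \<Rightarrow> int" where
  "weight x = of_bool (x \<in> B) - (if x \<in> A then int (S x) else 0)"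

definition excess :: "nat \<Rightarrow> nat \<Rightarrow> int" where
  "excess i k = (\<Sum>j<k. weight (walk i j))"

definition balanced :: "nat \<Rightarrow> nat \<Rightarrow> bool" where
  "balanced i k \<longleftrightarrow> 1 \<le> k \<and> k \<le> n \<and> card (segment i k \<inter> B) = (\<Sum>x \<in> segment i k \<inter> A. S x)"

definition shadow :: "nat \<Rightarrow> nat set" where
  "shadow i = (if \<exists>k. balanced i k then segment i (LEAST k. balanced i k) \<inter> B else B)"

lemma weight_le_1: "weight x \<le> 1"
  by (simp add: weight_def)

lemma weight_nonpos: "x \<in> A \<Longrightarrow> weight x \<le> 0"
  using disjoint by (auto simp: weight_def)

lemma excess_Suc: "excess i (Suc k) = excess i k + weight (walk i k)"
  by (simp add: excess_def)

lemma excess_1: "i < n \<Longrightarrow> excess i 1 = weight i"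
  by (simp add: excess_def walk_0)

lemma excess_add:
  assumes "i < n" "a + b \<le> n"
  shows "excess i (a + b) = excess i a + excess (walk i a) b"
  using assms(2)
proof (induction b)
  case 0
  then show ?case by (simp add: excess_def)
next
  case (Suc b)
  then show ?case by (simp add: excess_Suc walk_walk[OF \<open>i < n\<close>])
qed

lemma card_minus_sum_eq_excess:
  assumes "i < n" "k \<le> n"
  shows "int (card (segment i k \<inter> B)) - int (\<Sum>x \<in> segment i k \<inter> A. S x) = excess i k"
proof -
  have inj: "inj_on (walk i) {..<k}"
    using inj_on_walk[OF \<open>i < n\<close>] inj_on_subset assms(2) by fastforce
  have fin: "finite (segment i k)" by (simp add: segment_def)
  have "int (card (segment i k \<inter> B)) - int (\<Sum>x \<in> segment i k \<inter> A. S x)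
      = (\<Sum>x \<in> segment i k. of_bool (x \<in> B)) - (\<Sum>x \<in> segment i k. if x \<in> A then int (S x) else 0)"
    using fin by (simp add: sum.inter_restrict[symmetric])
  also have "\<dots> = (\<Sum>x \<in> segment i k. weight x)"
    by (simp add: weight_def sum_subtractf)
  also have "\<dots> = excess i k"
    using inj by (simp add: segment_def excess_def sum.reindex)
  finally show ?thesis .
qed

lemma balanced_iff_excess: "i < n \<Longrightarrow> balanced i k \<longleftrightarrow> 1 \<le> k \<and> k \<le> n \<and> excess i k = 0"
  using card_minus_sum_eq_excess[of i k] by (auto simp: balanced_def simp del: of_nat_sum)

lemma excess_neg_before_balanced:
  assumes "i \<in> A" "i < n" "k \<le> n" and unbalanced: "\<And>k'. k' < k \<Longrightarrow> \<not> balanced i k'"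
  shows "1 \<le> j \<Longrightarrow> j < k \<Longrightarrow> excess i j < 0"
proof (induction j)
  case 0
  then show ?case by simp
next
  case (Suc j)
  have "excess i (Suc j) \<le> 0"
  proof (cases "j = 0")
    case True
    then show ?thesis using excess_1 weight_nonpos assms(1,2) by simp
  next
    case False
    then show ?thesis using Suc excess_Suc[of i j] weight_le_1[of "walk i j"] by linarith
  qed
  moreover have "excess i (Suc j) \<noteq> 0"
    using unbalanced[OF Suc.prems(2)] balanced_iff_excess[OF \<open>i < n\<close>] Suc.prems assms(3) by simp
  ultimately show ?case by simp
qed

lemma segment_subset_if_start_mem:
  assumes "h \<in> A" "h' \<in> A" "h < n" "h' < n"
    and bal: "balanced h k" and unbal: "\<And>j. j < k \<Longrightarrow> \<not> balanced h j"
    and bal': "balanced h' k'" and unbal': "\<And>j. j < k' \<Longrightarrow> \<not> balanced h' j"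
    and "h' \<in> segment h k"
  shows "segment h' k' \<subseteq> segment h k"
proof -
  obtain d where d: "h' = walk h d" "d < k" using \<open>h' \<in> segment h k\<close> by (auto simp: segment_def)
  have "k \<le> n" using bal by (simp add: balanced_def)
  show ?thesis
  proof (cases "d = 0")
    case True
    then have "h' = h" using d walk_0 \<open>h < n\<close> by simp
    then have "k' = k" using bal bal' unbal unbal' by (metis linorder_neq_iff)
    then show ?thesis using \<open>h' = h\<close> by simp
  next
    case False
    have "excess h d < 0"
      using excess_neg_before_balanced[OF \<open>h \<in> A\<close> \<open>h < n\<close> \<open>k \<le> n\<close> unbal] False d(2) by simp
    moreover have "excess h k = 0" using bal balanced_iff_excess[OF \<open>h < n\<close>] by simp
    moreover have "excess h k = excess h d + excess h' (k - d)"
      using excess_add[OF \<open>h < n\<close>, of d "k - d"] d \<open>k \<le> n\<close> by simp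
    ultimately have "0 < excess h' (k - d)" by linarith
    moreover have "excess h' 1 \<le> 0" using excess_1 weight_nonpos assms(2,4) by simp
    moreover have "\<And>j. excess h' (Suc j) \<le> excess h' j + 1"
      using excess_Suc weight_le_1 by simp
    moreover have "1 \<le> k - d" using d(2) by simp
    ultimately obtain m where m: "1 \<le> m" "m \<le> k - d" "excess h' m = 0"
      using int_seq_unit_increments_hits_zero[of "excess h'" 1 "k - d"] by blast
    then have "balanced h' m" using balanced_iff_excess[OF \<open>h' < n\<close>] \<open>k \<le> n\<close> by simp
    then have "k' \<le> m" using unbal' not_le by blast
    then have "k' + d \<le> k" using m(2) d(2) by linarith
    show ?thesis
    proof
      fix x assume "x \<in> segment h' k'"
      then obtain j where "x = walk h' j" "j < k'" by (auto simp: segment_def)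
      then have "x = walk h (d + j)" using walk_walk[OF \<open>h < n\<close>, of d j] d \<open>k' + d \<le> k\<close> \<open>k \<le> n\<close> by simp
      then show "x \<in> segment h k" using \<open>j < k'\<close> \<open>k' + d \<le> k\<close> by (auto simp: segment_def)
    qed
  qed
qed

lemma shadow_laminar:
  assumes "h \<in> A" "h' \<in> A" "h < n" "h' < n"
  shows "shadow h \<inter> shadow h' = {} \<or> shadow h \<subseteq> shadow h' \<or> shadow h' \<subseteq> shadow h"
proof (cases "(\<exists>k. balanced h k) \<and> (\<exists>k. balanced h' k)")
  case False
  then show ?thesis by (auto simp: shadow_def)
next
  case True
  define k where "k = (LEAST k. balanced h k)"
  define k' where "k' = (LEAST k. balanced h' k)"
  have bal: "balanced h k" "balanced h' k'"
    using True LeastI_ex unfolding k_def k'_def by blast+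
  have unbal: "\<And>j. j < k \<Longrightarrow> \<not> balanced h j" "\<And>j. j < k' \<Longrightarrow> \<not> balanced h' j"
    unfolding k_def k'_def by (blast dest: not_less_Least)+
  have shadows: "shadow h = segment h k \<inter> B" "shadow h' = segment h' k' \<inter> B"
    using True by (simp_all add: shadow_def k_def k'_def)
  have "k \<le> n" "k' \<le> n" using bal by (simp_all add: balanced_def)
  consider "h' \<in> segment h k" | "h \<in> segment h' k'" | "h' \<notin> segment h k" "h \<notin> segment h' k'"
    by blast
  then show ?thesis
  proof cases
    case 1
    then show ?thesis
      using segment_subset_if_start_mem[OF assms bal(1) unbal(1) bal(2) unbal(2)] shadows by blast
  next
    case 2
    then show ?thesis
      using segment_subset_if_start_mem[OF assms(2,1,4,3) bal(2) unbal(2) bal(1) unbal(1)] shadows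
      by blast
  next
    case 3
    then show ?thesis
      using segments_disjoint[OF assms(3,4) \<open>k \<le> n\<close> \<open>k' \<le> n\<close>] shadows by blast
  qed
qed

end

lemma cyclic_walk_forward: "cyclic_walk n (\<lambda>i j. (i + j) mod n)"
proof
  fix i a b y z :: nat
  show "i < n \<Longrightarrow> (i + 0) mod n = i" by simp
  show "((i + a) mod n + b) mod n = (i + (a + b)) mod n"
    by (simp add: mod_add_left_eq add.assoc)
  show "i < n \<Longrightarrow> (i + a) mod n < n" by simp
  show "y = z" if "y < n" "z < n" "(y + b) mod n = (z + b) mod n"
    using that by (metis cong_add_rcancel_nat cong_def mod_less)
  show "inj_on (\<lambda>j. (i + j) mod n) {..<n}"
  proof (rule inj_onI)
    fix j j' assume "j \<in> {..<n}" "j' \<in> {..<n}" "(i + j) mod n = (i + j') mod n"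
    then have "[j = j'] (mod n)" by (simp add: cong_def[symmetric] cong_add_lcancel_nat)
    then show "j = j'" using \<open>j \<in> {..<n}\<close> \<open>j' \<in> {..<n}\<close> by (simp add: cong_def)
  qed
qed

lemma backward_mod_as_int: "j \<le> n \<Longrightarrow> int ((i + n - j) mod n) = (int i - int j) mod int n"
proof -
  assume "j \<le> n"
  then have "int (i + n - j) = (int i - int j) + int n" by simp
  then show ?thesis by (simp add: zmod_int)
qed

lemma cyclic_walk_backward: "cyclic_walk n (\<lambda>i j. (i + n - j) mod n)"
proof
  fix i a b y z :: nat
  show "i < n \<Longrightarrow> (i + n - 0) mod n = i" by simp
  show "((i + n - a) mod n + n - b) mod n = (i + n - (a + b)) mod n" if "a + b \<le> n"
  proof -
    have "int (((i + n - a) mod n + n - b) mod n) = ((int i - int a) mod int n - int b) mod int n"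
      using that by (simp add: backward_mod_as_int)
    also have "\<dots> = (int i - int (a + b)) mod int n"
      by (simp add: mod_diff_left_eq algebra_simps)
    also have "\<dots> = int ((i + n - (a + b)) mod n)"
      using that by (simp add: backward_mod_as_int)
    finally show ?thesis by (simp only: of_nat_eq_iff)
  qed
  show "i < n \<Longrightarrow> (i + n - a) mod n < n" by simp
  show "y = z" if "y < n" "z < n" "b \<le> n" "(y + n - b) mod n = (z + n - b) mod n"
  proof -
    have "(int y - int b) mod int n = (int z - int b) mod int n"
      using that by (metis backward_mod_as_int)
    then have "(int y - int b + int b) mod int n = (int z - int b + int b) mod int n"
      by (rule mod_add_cong[OF _ refl])
    then show "y = z" using that by simp
  qed
  show "inj_on (\<lambda>j. (i + n - j) mod n) {..<n}"
  proof (rule inj_onI)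
    fix j j' assume "j \<in> {..<n}" "j' \<in> {..<n}" "(i + n - j) mod n = (i + n - j') mod n"
    then have "(int i - int j) mod int n = (int i - int j') mod int n"
      by (metis backward_mod_as_int lessThan_iff less_imp_le)
    then have "(int i - (int i - int j)) mod int n = (int i - (int i - int j')) mod int n"
      by (rule mod_diff_cong[OF refl])
    then show "j = j'" using \<open>j \<in> {..<n}\<close> \<open>j' \<in> {..<n}\<close> by simp
  qed
qed

lemma shadow_h_laminar:
  assumes "h \<in> D1 a1 a2" "h' \<in> D1 a1 a2"
  shows "shadow_h a1 a2 S1 h \<inter> shadow_h a1 a2 S1 h' = {} \<or>
    shadow_h a1 a2 S1 h \<subseteq> shadow_h a1 a2 S1 h' \<or> shadow_h a1 a2 S1 h' \<subseteq> shadow_h a1 a2 S1 h"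
proof -
  define n where "n = length (dyck_path a1 a2)"
  interpret walk_shadow n "\<lambda>i j. (i + j) mod n" "D1 a1 a2" "D2 a1 a2" S1
    by (intro walk_shadow.intro cyclic_walk_forward walk_shadow_axioms.intro)
      (auto simp: D1_def D2_def)
  have segment_eq: "cyc_from n = segment" by (auto simp: cyc_from_def segment_def fun_eq_iff)
  have "shadow_h a1 a2 S1 = shadow"
    unfolding shadow_h_def Let_def n_def[symmetric] segment_eq shadow_def balanced_def ..
  moreover have "h < n" "h' < n" using assms by (simp_all add: D1_def n_def)
  ultimately show ?thesis using shadow_laminar assms by simp
qed

lemma shadow_v_laminar:
  assumes "v \<in> D2 a1 a2" "v' \<in> D2 a1 a2"
  shows "shadow_v a1 a2 S2 v \<inter> shadow_v a1 a2 S2 v' = {} \<or>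
    shadow_v a1 a2 S2 v \<subseteq> shadow_v a1 a2 S2 v' \<or> shadow_v a1 a2 S2 v' \<subseteq> shadow_v a1 a2 S2 v"
proof -
  define n where "n = length (dyck_path a1 a2)"
  interpret walk_shadow n "\<lambda>i j. (i + n - j) mod n" "D2 a1 a2" "D1 a1 a2" S2
    by (intro walk_shadow.intro cyclic_walk_backward walk_shadow_axioms.intro)
      (auto simp: D1_def D2_def)
  have segment_eq: "cyc_to n = segment" by (auto simp: cyc_to_def segment_def fun_eq_iff)
  have "shadow_v a1 a2 S2 = shadow"
    unfolding shadow_v_def Let_def n_def[symmetric] segment_eq shadow_def balanced_def ..
  moreover have "v < n" "v' < n" using assms by (simp_all add: D2_def n_def)
  ultimately show ?thesis using shadow_laminar assms by simp
qed

theorem lemma4p10: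
  fixes a1 a2 :: nat and S1 S2 :: "nat \<Rightarrow> nat"
  shows "(\<forall>h \<in> D1 a1 a2. \<forall>h' \<in> D1 a1 a2.
            shadow_h a1 a2 S1 h \<inter> shadow_h a1 a2 S1 h' = {} \<or>
            shadow_h a1 a2 S1 h \<subseteq> shadow_h a1 a2 S1 h' \<or>
            shadow_h a1 a2 S1 h' \<subseteq> shadow_h a1 a2 S1 h)
       \<and> (\<forall>v \<in> D2 a1 a2. \<forall>v' \<in> D2 a1 a2.
            shadow_v a1 a2 S2 v \<inter> shadow_v a1 a2 S2 v' = {} \<or>
            shadow_v a1 a2 S2 v \<subseteq> shadow_v a1 a2 S2 v' \<or>
            shadow_v a1 a2 S2 v' \<subseteq> shadow_v a1 a2 S2 v)"
  using shadow_h_laminar shadow_v_laminar by blast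

end
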